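(* Fix $Y$, $q>0$, $\delta>0$, $\rho\in\mathbb R$, and let $(a^*,b^* )=(a^*(\beta),b^*(\beta))$ be the selected pair as a function of $\beta\in(0,1)$. Then: 1. If $q\rho/\delta<1$, then $b^*(\beta)>0$ for all sufficiently small $\beta$, and $b^*(\beta)\to\infty$ as $\beta\downarrow0$. 2. If $q\rho/\delta>1$, then $a^*(\beta)=b^*(\beta)=0$ for all sufficiently small $\beta>0$. 3. If $q\rho/\delta=1$ and $\psi_X'(0+)<0$, then $b^*(\beta)>0$ for all $\beta\in(0,1)$. Moreover, as $\beta\downarrow0$, $b^*(\beta)\to(\overline Z^{(q)})^{-1}(-\psi_X'(0+)/q)$ and $a^*(\beta)\to0$. 4. If $q\rho/\delta=1$ and $\psi_X'(0+)\ge0$, then $a^*(\beta)=b^*(\beta)=0$ for all $\beta\in(0,1)$.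
   Context: Let $Y$ be a spectrally positive Lévy process (not a subordinator) with Laplace exponent $\psi_Y(\theta)=\log\mathbb E[e^{-\theta Y_1}]$ and $\mathbb E[Y_1]=-\psi_Y'(0+)<\infty$. Let $q>0$, $\delta>0$, and $\psi_X(\theta)=\psi_Y(\theta)+\delta\theta$. The scale functions $\mathbb W^{(q)},W^{(q)}$ vanish on $(-\infty,0)$, are continuous and strictly increasing on $[0,\infty)$, and have Laplace transforms $1/(\psi_Y(\theta)-q)$ and $1/(\psi_X(\theta)-q)$. Let $\mathbb Z^{(q)}(x)=1+q\int_0^x\mathbb W^{(q)}$, $Z^{(q)}(x)=1+q\int_0^xW^{(q)}$, $\overline Z^{(q)}(x)=\int_0^xZ^{(q)}$ (strictly increasing from $0$ to $\infty$ on $[0,\infty)$), and $R^{(q)}(z)=\overline Z^{(q)}(z)+\psi_X'(0+)/q$. Let $\tilde r^{(q)}_c(z)=R^{(q)}(z)+\delta\int_c^z\mathbb W^{(q)}(z-y)Z^{(q)}(y)\,dy$. For $\beta\in(0,1)$ and $\rho\in\mathbb R$, let $\Gamma(a,b)=\delta\mathbb Z^{(q)}(a)-q\rho-q\beta\tilde r^{(q)}_{b-a}(b)$ for $0\le a\le b$. Selected pair: if $\Gamma(0,0)=\delta-q\rho-\beta\psi_X'(0+)\le0$, then $a^*=b^*=0$. Otherwise, $b^*>0$ is the unique root of $\min_{0\le a\le b^*}\Gamma(a,b^* )=0$, and $a^*$ is the unique minimizer of $a\mapsto\Gamma(a,b^* )$ on $[0,b^*]$. *)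

theory Defs
  imports "HOL-Probability.Probability"
begin

text \<open>A spectrally positive Levy process Y is determined (in law) by a triplet
  (gam, s, Lm): linear coefficient gam, Gaussian variance s \<ge> 0, and a Levy measure Lm
  carried by (0,\<infinity>) with \<integral> min(1,z^2) Lm(dz) < \<infinity>.  Finiteness of E[Y_1] is
  \<integral>_{[1,\<infinity>)} z Lm(dz) < \<infinity>.\<close>

definition spos_levy_triplet :: "real \<Rightarrow> real \<Rightarrow> real measure \<Rightarrow> bool" where
  "spos_levy_triplet gam s Lm \<longleftrightarrow>
     s \<ge> 0 \<and> sets Lm = sets borel \<and> emeasure Lm {..0} = 0 \<and>
     (\<integral>\<^sup>+ z. ennreal (min 1 (z^2)) \<partial>Lm) < \<infinity>"

definition finite_mean_triplet :: "real measure \<Rightarrow> bool" where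
  "finite_mean_triplet Lm \<longleftrightarrow> (\<integral>\<^sup>+ z. ennreal (z * indicator {1..} z) \<partial>Lm) < \<infinity>"

text \<open>Y is a subordinator iff it has bounded variation (s = 0 and \<integral>_{(0,1)} z Lm(dz) < \<infinity>)
  and nonnegative drift gam - \<integral>_{(0,1)} z Lm(dz).\<close>

definition subordinator_triplet :: "real \<Rightarrow> real \<Rightarrow> real measure \<Rightarrow> bool" where
  "subordinator_triplet gam s Lm \<longleftrightarrow>
     s = 0 \<and> (\<integral>\<^sup>+ z. ennreal (z * indicator {0<..<1} z) \<partial>Lm) < \<infinity> \<and>
     gam - (\<integral> z. z * indicator {0<..<1} z \<partial>Lm) \<ge> 0"

text \<open>Laplace exponent psi_Y(\<theta>) = log E[exp(-\<theta> Y_1)], \<theta> \<ge> 0.\<close>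

definition levy_psi :: "real \<Rightarrow> real \<Rightarrow> real measure \<Rightarrow> real \<Rightarrow> real" where
  "levy_psi gam s Lm \<theta> =
     - gam * \<theta> + s * \<theta>^2 / 2 +
     (\<integral> z. exp (- \<theta> * z) - 1 + \<theta> * z * indicator {..<1} z \<partial>Lm)"

definition right_deriv0 :: "(real \<Rightarrow> real) \<Rightarrow> real" where
  "right_deriv0 f = (THE D. (f has_real_derivative D) (at_right 0))"

definition is_scale_function :: "(real \<Rightarrow> real) \<Rightarrow> real \<Rightarrow> (real \<Rightarrow> real) \<Rightarrow> bool" where
  "is_scale_function psi q W \<longleftrightarrow>
     (\<forall>x<0. W x = 0) \<and> continuous_on {0..} W \<and> strict_mono_on {0..} W \<and>
     (\<forall>\<theta>>0. psi \<theta> > q \<longrightarrow>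
        ((\<lambda>x. exp (- \<theta> * x) * W x) has_integral (1 / (psi \<theta> - q))) {0..})"

definition scaleZ :: "real \<Rightarrow> (real \<Rightarrow> real) \<Rightarrow> real \<Rightarrow> real" where
  "scaleZ q W x = 1 + q * integral {0..x} W"

definition scaleZbar :: "real \<Rightarrow> (real \<Rightarrow> real) \<Rightarrow> real \<Rightarrow> real" where
  "scaleZbar q W x = integral {0..x} (scaleZ q W)"

text \<open>Parameters: WW = \<bbbW>^(q) (of Y), W = W^(q) (of X), d = psi_X'(0+).\<close>

definition Rfun :: "real \<Rightarrow> (real \<Rightarrow> real) \<Rightarrow> real \<Rightarrow> real \<Rightarrow> real" where
  "Rfun q W d z = scaleZbar q W z + d / q"

definition rtilde :: "real \<Rightarrow> real \<Rightarrow> (real \<Rightarrow> real) \<Rightarrow> (real \<Rightarrow> real) \<Rightarrow> real \<Rightarrow> real \<Rightarrow> real \<Rightarrow> real" where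
  "rtilde q \<delta> WW W d c z =
     Rfun q W d z + \<delta> * integral {c..z} (\<lambda>y. WW (z - y) * scaleZ q W y)"

definition Gam :: "real \<Rightarrow> real \<Rightarrow> real \<Rightarrow> (real \<Rightarrow> real) \<Rightarrow> (real \<Rightarrow> real) \<Rightarrow> real \<Rightarrow> real
                    \<Rightarrow> real \<Rightarrow> real \<Rightarrow> real" where
  "Gam q \<delta> \<rho> WW W d \<beta> a b =
     \<delta> * scaleZ q WW a - q * \<rho> - q * \<beta> * rtilde q \<delta> WW W d (b - a) b"

definition bstar :: "real \<Rightarrow> real \<Rightarrow> real \<Rightarrow> (real \<Rightarrow> real) \<Rightarrow> (real \<Rightarrow> real) \<Rightarrow> real \<Rightarrow> real \<Rightarrow> real" where
  "bstar q \<delta> \<rho> WW W d \<beta> =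
     (if Gam q \<delta> \<rho> WW W d \<beta> 0 0 \<le> 0 then 0
      else (THE b. b > 0 \<and> (INF a\<in>{0..b}. Gam q \<delta> \<rho> WW W d \<beta> a b) = 0))"

definition astar :: "real \<Rightarrow> real \<Rightarrow> real \<Rightarrow> (real \<Rightarrow> real) \<Rightarrow> (real \<Rightarrow> real) \<Rightarrow> real \<Rightarrow> real \<Rightarrow> real" where
  "astar q \<delta> \<rho> WW W d \<beta> =
     (if Gam q \<delta> \<rho> WW W d \<beta> 0 0 \<le> 0 then 0
      else (let b = bstar q \<delta> \<rho> WW W d \<beta> in
            THE a. a \<in> {0..b} \<and>
              (\<forall>a'\<in>{0..b}. Gam q \<delta> \<rho> WW W d \<beta> a b \<le> Gam q \<delta> \<rho> WW W d \<beta> a' b)))"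

end

theory Submission
  imports Defs "HOL-Real_Asymp.Real_Asymp"
begin

(*
  Write Z and ZZ for the Z^(q)-functions of W and WW, Zbar for Zbar^(q), and d = psi_X'(0+).
  Differentiating in a, dGam/da (a, b) = q \<delta> WW(a) (1 - \<beta> Z(b - a)); for 0 < \<beta> < 1 the
  sign changes once, where Z(b - a) = 1/\<beta>, so Gam(., b) has the unique minimiser
  max 0 (b - z\<beta>) with Z(z\<beta>) = 1/\<beta>.  The minimum is strictly decreasing in b (as Zbar' = Z \<ge> 1),
  starts at Gam(0, 0) = \<delta> - q \<rho> - \<beta> d and tends to -\<infinity>, so when Gam(0, 0) > 0 the selected
  pair exists and b* is the unique zero of the minimum.  As \<beta> \<rightarrow> 0, Gam(a, b) \<ge> \<delta> - q \<rho> - O(\<beta>)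
  uniformly on compacts, which decides the cases q \<rho> \<noteq> \<delta>.  In the critical case q \<rho> = \<delta>,
  z\<beta> \<rightarrow> \<infinity>, so eventually a* = 0 and b* solves Gam(0, b) = -\<beta> (q Zbar(b) + d) = 0.
  The scale functions enter only through their positivity on (0, \<infinity>), which follows from the
  Laplace transforms because the Laplace exponent of a non-subordinator tends to \<infinity>.
*)

section \<open>Nonnegative scale functions\<close>

definition nonneg_scale :: "(real \<Rightarrow> real) \<Rightarrow> bool" where
  "nonneg_scale W \<longleftrightarrow> continuous_on {0..} W \<and> strict_mono_on {0..} W \<and> 0 \<le> W 0"

lemma scaleZbar_0 [simp]: "scaleZbar q W 0 = 0"
  by (simp add: scaleZbar_def)

lemma continuous_on_atLeast_if_Icc:
  fixes f :: "real \<Rightarrow> real"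
  assumes "\<And>b. a \<le> b \<Longrightarrow> continuous_on {a..b} f"
  shows "continuous_on {a..} f"
  unfolding continuous_on_eq_continuous_within
proof
  fix x assume x: "x \<in> {a..}"
  have "continuous (at x within {a..x+1}) f"
    using assms[of "x+1"] x by (auto simp: continuous_on_eq_continuous_within)
  moreover have "at x within {a..} = at x within {a..x+1}"
    by (rule at_within_nhd[of x "{..<x+1}"]) (use x in auto)
  ultimately show "continuous (at x within {a..}) f" by (simp add: continuous_within)
qed

context
  fixes W :: "real \<Rightarrow> real"
  assumes W: "nonneg_scale W"
begin

lemma nonneg_scale_continuous_on: "0 \<le> a \<Longrightarrow> continuous_on {a..b} W"
  using W unfolding nonneg_scale_def by (auto intro: continuous_on_subset)

lemma nonneg_scale_integrable: "0 \<le> a \<Longrightarrow> W integrable_on {a..b}"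
  by (rule integrable_continuous_real) (rule nonneg_scale_continuous_on)

lemma nonneg_scale_less: "0 \<le> x \<Longrightarrow> x < y \<Longrightarrow> W x < W y"
  using W unfolding nonneg_scale_def by (auto intro: strict_mono_onD)

lemma nonneg_scale_mono: "0 \<le> x \<Longrightarrow> x \<le> y \<Longrightarrow> W x \<le> W y"
  using nonneg_scale_less by (cases "x = y") (auto intro: less_imp_le)

lemma nonneg_scale_pos: "0 < x \<Longrightarrow> 0 < W x"
  using W nonneg_scale_less[of 0 x] unfolding nonneg_scale_def by simp

lemma nonneg_scale_nonneg: "0 \<le> x \<Longrightarrow> 0 \<le> W x"
  using nonneg_scale_pos[of x] W unfolding nonneg_scale_def by (cases "x = 0") auto

lemma integral_nonneg_scale_pos:
  assumes "0 \<le> x" "x < y"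
  shows "0 < integral {x..y} W"
proof -
  define m where "m = (x + y) / 2"
  have "0 < (y - m) * W m"
    using assms nonneg_scale_pos[of m] by (simp add: m_def)
  also have "\<dots> = integral {m..y} (\<lambda>_. W m)"
    using assms by (simp add: m_def)
  also have "\<dots> \<le> integral {m..y} W"
    using assms by (intro integral_le nonneg_scale_integrable nonneg_scale_mono) (auto simp: m_def)
  also have "\<dots> \<le> integral {x..y} W"
    using assms by (intro integral_subset_le nonneg_scale_integrable ballI nonneg_scale_nonneg)
      (auto simp: m_def)
  finally show ?thesis .
qed

lemma scaleZ_diff:
  assumes "0 \<le> x" "x \<le> y"
  shows "scaleZ q W y - scaleZ q W x = q * integral {x..y} W"
proof -
  have "integral {0..x} W + integral {x..y} W = integral {0..y} W"
    by (rule Henstock_Kurzweil_Integration.integral_combine)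
      (use assms nonneg_scale_integrable in auto)
  then show ?thesis unfolding scaleZ_def by (simp add: algebra_simps flip: distrib_left)
qed

lemma continuous_on_scaleZ: "continuous_on {0..} (scaleZ q W)"
proof (rule continuous_on_atLeast_if_Icc)
  show "continuous_on {0..b} (scaleZ q W)" for b
    unfolding scaleZ_def
    by (intro continuous_intros indefinite_integral_continuous_1 nonneg_scale_integrable) simp
qed

context
  fixes q :: real
  assumes q: "q > 0"
begin

lemma scaleZ_less:
  assumes "0 \<le> x" "x < y"
  shows "scaleZ q W x < scaleZ q W y"
  using scaleZ_diff[of x y q] mult_pos_pos[OF q integral_nonneg_scale_pos[OF assms]] assms
  by simp

lemma scaleZ_less_iff: "0 \<le> x \<Longrightarrow> 0 \<le> y \<Longrightarrow> scaleZ q W x < scaleZ q W y \<longleftrightarrow> x < y"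
  using scaleZ_less[of x y] scaleZ_less[of y x] by (cases x y rule: linorder_cases) auto

lemma scaleZ_mono: "0 \<le> x \<Longrightarrow> x \<le> y \<Longrightarrow> scaleZ q W x \<le> scaleZ q W y"
  using scaleZ_less[of x y] by (cases "x = y") auto

lemma scaleZ_ge_1: "0 \<le> y \<Longrightarrow> 1 \<le> scaleZ q W y"
  using scaleZ_mono[of 0 y] by (simp add: scaleZ_def)

lemma scaleZ_attains:
  assumes "1 < c"
  obtains z where "0 < z" "scaleZ q W z = c"
proof -
  define y where "y = 1 + c / (q * W 1)"
  have W1: "0 < W 1" by (rule nonneg_scale_pos) simp
  then have y: "1 \<le> y" using q assms by (simp add: y_def)
  have "c = q * ((y - 1) * W 1)"
    using q W1 by (simp add: y_def)
  also have "(y - 1) * W 1 = integral {1..y} (\<lambda>_. W 1)"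
    using y by simp
  also have "\<dots> \<le> integral {1..y} W"
    by (intro integral_le nonneg_scale_integrable nonneg_scale_mono) auto
  also have "q * \<dots> = scaleZ q W y - scaleZ q W 1"
    using y by (simp add: scaleZ_diff)
  also have "\<dots> \<le> scaleZ q W y - 1"
    using scaleZ_ge_1[of 1] by simp
  finally have "c \<le> scaleZ q W y"
    using q by (simp add: mult_left_mono)
  moreover have "scaleZ q W 0 \<le> c" using assms by (simp add: scaleZ_def)
  ultimately obtain z where z: "0 \<le> z" "z \<le> y" "scaleZ q W z = c"
    using IVT'[of "scaleZ q W" 0 c y] y continuous_on_subset[OF continuous_on_scaleZ, of "{0..y}"]
    by auto
  moreover have "z \<noteq> 0" using z assms by (auto simp: scaleZ_def)
  ultimately show ?thesis by (intro that[of z]) auto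
qed

end

lemma continuous_on_scaleZbar: "continuous_on {0..} (scaleZbar q W)"
proof (rule continuous_on_atLeast_if_Icc)
  show "continuous_on {0..b} (scaleZbar q W)" for b
    unfolding scaleZbar_def
    by (intro indefinite_integral_continuous_1 integrable_continuous_real
        continuous_on_subset[OF continuous_on_scaleZ]) auto
qed

lemma scaleZ_integrable: "0 \<le> a \<Longrightarrow> scaleZ q W integrable_on {a..b}"
  by (intro integrable_continuous_real continuous_on_subset[OF continuous_on_scaleZ]) auto

lemma scaleZbar_diff_ge:
  assumes "q > 0" "0 \<le> x" "x \<le> y"
  shows "y - x \<le> scaleZbar q W y - scaleZbar q W x"
proof -
  have "integral {0..x} (scaleZ q W) + integral {x..y} (scaleZ q W) = integral {0..y} (scaleZ q W)"
    by (rule Henstock_Kurzweil_Integration.integral_combine) (use assms scaleZ_integrable in auto)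
  moreover have "integral {x..y} (\<lambda>_. 1) \<le> integral {x..y} (scaleZ q W)"
    by (rule integral_le) (use assms scaleZ_integrable scaleZ_ge_1 in auto)
  ultimately show ?thesis using assms unfolding scaleZbar_def by simp
qed

lemma scaleZbar_attains:
  assumes "q > 0" "0 \<le> y"
  obtains c where "0 \<le> c" "scaleZbar q W c = y"
proof -
  have "y \<le> scaleZbar q W y" using scaleZbar_diff_ge[OF assms(1) order_refl assms(2)] by simp
  then obtain c where "0 \<le> c" "c \<le> y" "scaleZbar q W c = y"
    using IVT'[of "scaleZbar q W" 0 y y] assms(2)
      continuous_on_subset[OF continuous_on_scaleZbar, of "{0..y}"] by auto
  with that show ?thesis by blast
qed

lemma inj_on_scaleZbar: "q > 0 \<Longrightarrow> inj_on (scaleZbar q W) {0..}"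
proof (rule inj_onI, rule ccontr)
  fix x y assume "q > 0" "x \<in> {0..}" "y \<in> {0..}" "scaleZbar q W x = scaleZbar q W y" "x \<noteq> y"
  then show False
    using scaleZbar_diff_ge[of q x y] scaleZbar_diff_ge[of q y x] by (auto simp: neq_iff)
qed

end

section \<open>Nonnegativity of a scale function from its Laplace transform\<close>

lemma has_integral_exp_neg_Icc:
  fixes \<theta> x :: real
  assumes "\<theta> > 0" "0 \<le> x"
  shows "((\<lambda>t. exp (- \<theta> * t)) has_integral (1 - exp (- \<theta> * x)) / \<theta>) {0..x}"
proof -
  have "((\<lambda>t. exp (- \<theta> * t)) has_integral (- exp (- \<theta> * x) / \<theta>) - (- exp (- \<theta> * 0) / \<theta>)) {0..x}"
  proof (rule fundamental_theorem_of_calculus[OF assms(2)])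
    fix t assume "t \<in> {0..x}"
    have "((\<lambda>t. - exp (- \<theta> * t) / \<theta>) has_real_derivative exp (- \<theta> * t)) (at t within {0..x})"
      using assms by (auto intro!: derivative_eq_intros)
    then show "((\<lambda>t. - exp (- \<theta> * t) / \<theta>) has_vector_derivative exp (- \<theta> * t)) (at t within {0..x})"
      by (simp add: has_real_derivative_iff_has_vector_derivative)
  qed
  then show ?thesis by (simp add: diff_divide_distrib)
qed

lemma Laplace_transform_upper_bound:
  fixes W :: "real \<Rightarrow> real"
  assumes "0 < x2" "x2 \<le> x1" "0 < \<theta>1" "\<theta>1 \<le> \<theta>"
    and below: "\<And>x. 0 \<le> x \<Longrightarrow> x \<le> x2 \<Longrightarrow> W x \<le> w"
    and middle: "\<And>x. x2 < x \<Longrightarrow> x \<le> x1 \<Longrightarrow> W x \<le> 0"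
    and above: "\<And>x. x1 < x \<Longrightarrow> 0 \<le> W x"
    and L: "((\<lambda>x. exp (- \<theta> * x) * W x) has_integral L) {0..}"
    and T: "((\<lambda>x. if x1 < x then exp (- \<theta>1 * x) * W x else 0) has_integral T) {0..}"
  shows "\<theta> * L \<le> (1 - exp (- \<theta> * x2)) * w + \<theta> * exp (- (\<theta> - \<theta>1) * x1) * T"
proof -
  have \<theta>: "0 < \<theta>" using assms by simp
  have head: "((\<lambda>x. if x \<in> {..x2} then exp (- \<theta> * x) * w else 0) has_integral
      (1 - exp (- \<theta> * x2)) / \<theta> * w) {0..}"
    by (subst has_integral_restrict_Int)
      (use has_integral_mult_left[OF has_integral_exp_neg_Icc[OF \<theta>], of x2 w] assms(1) in
        \<open>simp add: Int_commute atLeastAtMost_def\<close>)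
  have le: "L \<le> (1 - exp (- \<theta> * x2)) / \<theta> * w + exp (- (\<theta> - \<theta>1) * x1) * T"
  proof (rule has_integral_le[OF L has_integral_add[OF head has_integral_mult_right[OF T]]])
    fix x :: real assume x: "x \<in> {0..}"
    consider "x \<le> x2" | "x2 < x" "x \<le> x1" | "x1 < x" by linarith
    then show "exp (- \<theta> * x) * W x \<le> (if x \<in> {..x2} then exp (- \<theta> * x) * w else 0) +
        exp (- (\<theta> - \<theta>1) * x1) * (if x1 < x then exp (- \<theta>1 * x) * W x else 0)"
    proof cases
      case 1
      then show ?thesis using x assms(2) below[of x] by (simp add: mult_left_mono)
    next
      case 2
      then show ?thesis using assms(1) middle[of x] by (simp add: mult_nonneg_nonpos)
    next
      case 3
      have "exp (- \<theta> * x) = exp (- (\<theta> - \<theta>1) * x) * exp (- \<theta>1 * x)"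
        by (simp add: exp_add[symmetric] algebra_simps)
      moreover have "exp (- (\<theta> - \<theta>1) * x) \<le> exp (- (\<theta> - \<theta>1) * x1)"
        using 3 assms(4) mult_left_mono[of x1 x "\<theta> - \<theta>1"] by (simp add: algebra_simps)
      ultimately show ?thesis using 3 above[of x] assms(1,2)
        by (simp add: mult.assoc mult_right_mono)
    qed
  qed
  have eq: "\<theta> * ((1 - exp (- \<theta> * x2)) / \<theta> * w + exp (- (\<theta> - \<theta>1) * x1) * T)
      = (1 - exp (- \<theta> * x2)) * w + \<theta> * exp (- (\<theta> - \<theta>1) * x1) * T"
    using \<theta> by (simp add: field_simps)
  show ?thesis using mult_left_mono[OF le less_imp_le[OF \<theta>]] unfolding eq .
qed

text \<open>If W 0 < 0 and W changes sign at x1, then as \<theta> \<rightarrow> \<infinity> the mass of the Laplace transform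
  concentrates near 0: \<theta> times the transform tends to a value \<le> W (x1/2) < 0.\<close>

lemma Laplace_transform_eventually_neg:
  fixes W L :: "real \<Rightarrow> real"
  assumes cont: "continuous_on {0..} W" and mono: "strict_mono_on {0..} W"
    and x1: "0 < x1" "W x1 = 0" and \<theta>1: "0 < \<theta>1"
    and LT: "\<And>\<theta>. \<theta>1 \<le> \<theta> \<Longrightarrow> ((\<lambda>x. exp (- \<theta> * x) * W x) has_integral L \<theta>) {0..}"
  shows "\<forall>\<^sub>F \<theta> in at_top. \<theta> * L \<theta> < 0"
proof -
  define x2 where "x2 = x1 / 2"
  have x2: "0 < x2" "x2 < x1" using x1 by (auto simp: x2_def)
  have W_less: "W x < W x'" if "0 \<le> x" "x < x'" for x x'
    using strict_mono_onD[OF mono] that by auto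
  have W_le: "W x \<le> W x'" if "0 \<le> x" "x \<le> x'" for x x'
    using W_less[of x x'] that by (cases "x = x'") auto
  define g where "g x = exp (- \<theta>1 * x) * W x" for x
  have "continuous_on {0..x1} g"
    unfolding g_def by (intro continuous_intros continuous_on_subset[OF cont]) auto
  then obtain I where I: "(g has_integral I) {0..x1}"
    using integrable_continuous_real by blast
  have "((\<lambda>x. if x \<in> {..x1} then g x else 0) has_integral I) {0..}"
    using I by (subst has_integral_restrict_Int) (simp add: Int_commute atLeastAtMost_def)
  from has_integral_diff[OF LT[OF order_refl] this]
  have "((\<lambda>x. g x - (if x \<in> {..x1} then g x else 0)) has_integral L \<theta>1 - I) {0..}"
    unfolding g_def by simp
  moreover have "(\<lambda>x. g x - (if x \<in> {..x1} then g x else 0)) = (\<lambda>x. if x1 < x then g x else 0)"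
    by (auto simp: fun_eq_iff)
  ultimately have T: "((\<lambda>x. if x1 < x then exp (- \<theta>1 * x) * W x else 0) has_integral L \<theta>1 - I) {0..}"
    unfolding g_def by simp
  have "((\<lambda>\<theta>. (1 - exp (- \<theta> * x2)) * W x2 + \<theta> * exp (- (\<theta> - \<theta>1) * x1) * (L \<theta>1 - I))
      \<longlongrightarrow> W x2) at_top"
    using x1 x2 by real_asymp
  then have "\<forall>\<^sub>F \<theta> in at_top. (1 - exp (- \<theta> * x2)) * W x2 + \<theta> * exp (- (\<theta> - \<theta>1) * x1) * (L \<theta>1 - I) < 0"
    using W_less[of x2 x1] x1 x2 by (intro order_tendstoD) auto
  moreover have "\<forall>\<^sub>F \<theta> in at_top.
      \<theta> * L \<theta> \<le> (1 - exp (- \<theta> * x2)) * W x2 + \<theta> * exp (- (\<theta> - \<theta>1) * x1) * (L \<theta>1 - I)"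
    using eventually_ge_at_top[of \<theta>1]
  proof eventually_elim
    case (elim \<theta>)
    show ?case
    proof (rule Laplace_transform_upper_bound[OF x2(1) less_imp_le[OF x2(2)] \<theta>1 elim _ _ _ LT[OF elim] T])
      show "W x \<le> W x2" if "0 \<le> x" "x \<le> x2" for x using that by (rule W_le)
      show "W x \<le> 0" if "x2 < x" "x \<le> x1" for x using W_le[of x x1] that x1 x2 by simp
      show "0 \<le> W x" if "x1 < x" for x using W_le[of x1 x] that x1 by simp
    qed
  qed
  ultimately show ?thesis by eventually_elim simp
qed

lemma Laplace_transform_pos_imp_nonneg_at_0:
  fixes W L :: "real \<Rightarrow> real"
  assumes cont: "continuous_on {0..} W" and mono: "strict_mono_on {0..} W"
    and LT: "\<forall>\<^sub>F \<theta> in at_top. ((\<lambda>x. exp (- \<theta> * x) * W x) has_integral L \<theta>) {0..} \<and> 0 < L \<theta>"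
  shows "0 \<le> W 0"
proof (rule ccontr)
  assume "\<not> 0 \<le> W 0"
  then have W0: "W 0 < 0" by simp
  obtain N where N: "\<And>\<theta>. N \<le> \<theta> \<Longrightarrow> ((\<lambda>x. exp (- \<theta> * x) * W x) has_integral L \<theta>) {0..} \<and> 0 < L \<theta>"
    using LT unfolding eventually_at_top_linorder by blast
  define \<theta>1 where "\<theta>1 = max 1 N"
  have \<theta>1: "0 < \<theta>1" by (simp add: \<theta>1_def)
  have LT1: "((\<lambda>x. exp (- \<theta> * x) * W x) has_integral L \<theta>) {0..} \<and> 0 < L \<theta>" if "\<theta>1 \<le> \<theta>" for \<theta>
    using N that by (simp add: \<theta>1_def)
  have "\<not> (\<forall>x\<ge>0. W x \<le> 0)"
  proof
    assume "\<forall>x\<ge>0. W x \<le> 0"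
    then have "0 \<le> - L \<theta>1"
      by (intro has_integral_nonneg[OF has_integral_neg[OF conjunct1[OF LT1]]])
        (auto simp: mult_nonneg_nonpos)
    then show False using LT1[of \<theta>1] by simp
  qed
  then obtain y where y: "0 \<le> y" "0 < W y" by (auto simp: not_le)
  obtain x1 where x1: "0 \<le> x1" "W x1 = 0"
    using IVT'[of W 0 0 y] y W0 continuous_on_subset[OF cont, of "{0..y}"] by auto
  have "0 < x1" using x1 W0 by (cases "x1 = 0") auto
  have "\<forall>\<^sub>F \<theta> in at_top. \<theta> * L \<theta> < 0"
    using LT1 by (intro Laplace_transform_eventually_neg[OF cont mono \<open>0 < x1\<close> x1(2) \<theta>1]) simp
  moreover have "\<forall>\<^sub>F \<theta> in at_top. 0 < \<theta> * L \<theta>"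
    using eventually_ge_at_top[of \<theta>1] by eventually_elim (use \<theta>1 LT1 in simp)
  ultimately have "\<forall>\<^sub>F \<theta>::real in at_top. False" by eventually_elim simp
  then show False by simp
qed

lemma nonneg_scale_if_scale_function:
  assumes "is_scale_function psi q W" and "filterlim psi at_top at_top"
  shows "nonneg_scale W"
proof -
  have "\<forall>\<^sub>F \<theta> in at_top. ((\<lambda>x. exp (- \<theta> * x) * W x) has_integral 1 / (psi \<theta> - q)) {0..}
      \<and> 0 < 1 / (psi \<theta> - q)"
    using eventually_gt_at_top[of 0] filterlim_at_top_dense[THEN iffD1, OF assms(2), rule_format, of q]
    by eventually_elim (use assms(1) in \<open>auto simp: is_scale_function_def\<close>)
  then have "0 \<le> W 0"
    by (rule Laplace_transform_pos_imp_nonneg_at_0[rotated 2])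
      (use assms(1) in \<open>auto simp: is_scale_function_def\<close>)
  then show ?thesis using assms(1) unfolding is_scale_function_def nonneg_scale_def by blast
qed

section \<open>Growth of the Laplace exponent\<close>

lemma exp_neg_le_quadratic:
  fixes x :: real
  assumes "0 \<le> x"
  shows "exp (- x) \<le> 1 - x + x\<^sup>2 / 2"
proof -
  have pos: "0 < 1 + x + x\<^sup>2 / 2" using assms by (simp add: add_pos_nonneg)
  have "exp (- x) \<le> 1 / (1 + x + x\<^sup>2 / 2)"
    using exp_lower_Taylor_quadratic[OF assms] pos by (simp add: exp_minus divide_simps)
  also have "\<dots> \<le> 1 - x + x\<^sup>2 / 2"
  proof -
    have "(1 - x + x\<^sup>2 / 2) * (1 + x + x\<^sup>2 / 2) = 1 + x ^ 4 / 4"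
      by (simp add: algebra_simps power2_eq_square power4_eq_xxxx)
    then show ?thesis using pos by (simp add: divide_le_eq)
  qed
  finally show ?thesis .
qed

locale spos_levy =
  fixes gam s :: real and Lm :: "real measure"
  assumes triplet: "spos_levy_triplet gam s Lm"
begin

lemma s_nonneg: "0 \<le> s"
  and sets_Lm: "sets Lm = sets borel"
  and Lm_nonpos: "emeasure Lm {..0} = 0"
  and nn_integral_min_square: "(\<integral>\<^sup>+ z. ennreal (min 1 (z^2)) \<partial>Lm) < \<infinity>"
  using triplet unfolding spos_levy_triplet_def by auto

lemma space_Lm [simp]: "space Lm = UNIV"
  using sets_eq_imp_space_eq[OF sets_Lm] by simp

lemma borel_measurable_Lm [measurable_cong]: "borel_measurable Lm = borel_measurable borel"
  by (rule measurable_cong_sets[OF sets_Lm refl])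

lemma AE_Lm_pos: "AE z in Lm. 0 < z"
  by (rule AE_I'[of "{..0}"]) (use Lm_nonpos sets_Lm in \<open>auto intro: null_setsI\<close>)

lemma emeasure_Lm_finite:
  assumes "0 < e" "e \<le> 1" "A \<subseteq> {e<..}" "A \<in> sets borel"
  shows "emeasure Lm A < \<infinity>"
proof -
  have "ennreal (e^2) * emeasure Lm A = (\<integral>\<^sup>+ z. ennreal (e^2) * indicator A z \<partial>Lm)"
    using assms(4) sets_Lm by (simp add: nn_integral_cmult_indicator)
  also have "\<dots> \<le> (\<integral>\<^sup>+ z. ennreal (min 1 (z^2)) \<partial>Lm)"
  proof (rule nn_integral_mono)
    fix z
    show "ennreal (e^2) * indicator A z \<le> ennreal (min 1 (z^2))"
    proof (cases "z \<in> A")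
      case True
      then have "e^2 \<le> z^2" using assms by (intro power_mono) auto
      moreover have "e^2 \<le> 1" using assms by (simp add: power_le_one)
      ultimately show ?thesis using True by (simp add: ennreal_leI)
    qed simp
  qed
  also have "\<dots> < \<infinity>" by (rule nn_integral_min_square)
  finally show ?thesis
    using assms(1) ennreal_mult_top[of "ennreal (e^2)"]
    by (cases "emeasure Lm A = \<infinity>") (auto simp: less_top)
qed

lemma integrable_indicator_Lm:
  assumes "0 < e" "e \<le> 1" "A \<subseteq> {e<..}" "A \<in> sets borel"
  shows "integrable Lm (indicator A :: real \<Rightarrow> real)"
  using emeasure_Lm_finite[OF assms] assms(4) sets_Lm by (intro integrable_real_indicator) auto

lemma integrable_levy_integrand:
  assumes "0 < \<theta>"
  shows "integrable Lm (\<lambda>z. exp (- \<theta> * z) - 1 + \<theta> * z * indicator {..<1} z)"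
proof (rule Bochner_Integration.integrable_bound)
  define C where "C = 1 + \<theta>^2"
  have C: "1 \<le> C" by (simp add: C_def)
  show "integrable Lm (\<lambda>z. C * min 1 (z^2))"
  proof (rule integrableI_nonneg)
    have "(\<integral>\<^sup>+ z. ennreal (C * min 1 (z^2)) \<partial>Lm) = ennreal C * (\<integral>\<^sup>+ z. ennreal (min 1 (z^2)) \<partial>Lm)"
      using C by (subst nn_integral_cmult[symmetric]) (auto intro!: nn_integral_cong simp: ennreal_mult)
    also have "\<dots> < \<infinity>" using nn_integral_min_square by (simp add: ennreal_mult_less_top)
    finally show "(\<integral>\<^sup>+ z. ennreal (C * min 1 (z^2)) \<partial>Lm) < \<infinity>" .
  qed (use C in auto)
  show "AE z in Lm. norm (exp (- \<theta> * z) - 1 + \<theta> * z * indicator {..<1} z) \<le> norm (C * min 1 (z^2))"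
    using AE_Lm_pos
  proof eventually_elim
    case (elim z)
    show ?case
    proof (cases "z < 1")
      case True
      have "exp (- (\<theta> * z)) \<le> 1 - \<theta> * z + (\<theta> * z)\<^sup>2 / 2"
        using elim assms by (intro exp_neg_le_quadratic) auto
      moreover have "1 - \<theta> * z \<le> exp (- (\<theta> * z))" using exp_ge_add_one_self[of "- (\<theta> * z)"] by simp
      moreover have "(\<theta> * z)\<^sup>2 / 2 \<le> C * z^2"
        unfolding C_def by (simp add: power_mult_distrib algebra_simps)
      moreover have "z^2 \<le> 1" using True elim by (simp add: power_le_one)
      ultimately show ?thesis using True C by (auto simp: min_def)
    next
      case False
      have "0 < exp (- (\<theta> * z))" "exp (- (\<theta> * z)) \<le> 1" using elim assms by auto
      then have "\<bar>exp (- (\<theta> * z)) - 1\<bar> \<le> C" unfolding abs_le_iff using C by linarith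
      moreover have "1 \<le> z^2" using False by (simp add: one_le_power)
      ultimately show ?thesis using False by (simp add: min_def)
    qed
  qed
qed (simp_all add: borel_measurable_Lm)

definition small_jump_mean :: "real \<Rightarrow> real" where
  "small_jump_mean e = (\<integral> z. z * indicator {e<..<1} z \<partial>Lm)"

lemma integrable_small_jumps:
  assumes "0 < e" "e \<le> 1"
  shows "integrable Lm (\<lambda>z. z * indicator {e<..<1} z)"
proof (rule Bochner_Integration.integrable_bound)
  show "integrable Lm (indicator {e<..<1} :: real \<Rightarrow> real)"
    using assms by (intro integrable_indicator_Lm) auto
  show "AE z in Lm. norm (z * indicator {e<..<1} z) \<le> norm (indicator {e<..<1} z :: real)"
    using assms by (auto split: split_indicator)
qed (simp add: borel_measurable_Lm)

lemma small_jump_mean_nonneg: "0 < e \<Longrightarrow> 0 \<le> small_jump_mean e"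
  unfolding small_jump_mean_def
  by (intro Bochner_Integration.integral_nonneg) (auto split: split_indicator)

text \<open>Compare the integrand with \<theta> z - 1 on the jumps in (e, 1) and with -1 on those in [1, \<infinity>).\<close>

lemma levy_psi_lower_bound:
  assumes "0 < \<theta>" "0 < e" "e < 1"
  shows "- gam * \<theta> + s * \<theta>^2 / 2 + \<theta> * small_jump_mean e - (measure Lm {e<..<1} + measure Lm {1..})
    \<le> levy_psi gam s Lm \<theta>"
proof -
  define k where "k z = \<theta> * (z * indicator {e<..<1} z) - indicator {e<..<1} z - indicator {1..} z" for z
  have int: "integrable Lm (indicator {e<..<1} :: real \<Rightarrow> real)"
    "integrable Lm (indicator {1..} :: real \<Rightarrow> real)"
    "integrable Lm (\<lambda>z. z * indicator {e<..<1} z)"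
    using assms by (auto intro!: integrable_indicator_Lm[of e] integrable_small_jumps)
  have "\<theta> * small_jump_mean e - measure Lm {e<..<1} - measure Lm {1..} = (\<integral> z. k z \<partial>Lm)"
    unfolding k_def small_jump_mean_def using int by simp
  also have "\<dots> \<le> (\<integral> z. exp (- \<theta> * z) - 1 + \<theta> * z * indicator {..<1} z \<partial>Lm)"
  proof (rule Bochner_Integration.integral_mono[OF _ integrable_levy_integrand[OF assms(1)]])
    show "integrable Lm k" unfolding k_def using int by auto
    fix z :: real
    have lo: "1 - \<theta> * z \<le> exp (- (\<theta> * z))" using exp_ge_add_one_self[of "- (\<theta> * z)"] by simp
    have pos: "0 < exp (- (\<theta> * z))" by simp
    consider "z \<le> e" | "e < z" "z < 1" | "1 \<le> z" by linarith
    then show "k z \<le> exp (- \<theta> * z) - 1 + \<theta> * z * indicator {..<1} z"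
    proof cases
      case 1
      then have "z < 1" using assms by simp
      then show ?thesis using 1 lo by (simp add: k_def)
    qed (use lo pos in \<open>simp_all add: k_def\<close>)
  qed
  finally show ?thesis using s_nonneg unfolding levy_psi_def by simp
qed

lemma small_jump_mean_LIMSEQ:
  "(\<lambda>n. ennreal (small_jump_mean (1 / (real n + 2)))) \<longlonglongrightarrow> (\<integral>\<^sup>+ z. ennreal (z * indicator {0<..<1} z) \<partial>Lm)"
proof -
  define e where "e n = 1 / (real n + 2)" for n :: nat
  have e: "0 < e n" "e n < 1" for n by (auto simp: e_def)
  have "(\<lambda>n. \<integral>\<^sup>+ z. ennreal (z * indicator {e n<..<1} z) \<partial>Lm)
      \<longlonglongrightarrow> (\<integral>\<^sup>+ z. ennreal (z * indicator {0<..<1} z) \<partial>Lm)"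
  proof (rule nn_integral_LIMSEQ)
    show "incseq (\<lambda>n z. ennreal (z * indicator {e n<..<1} z))"
      unfolding incseq_def le_fun_def
    proof (intro allI impI)
      fix m n :: nat and z :: real assume "m \<le> n"
      then have "e n \<le> e m" by (simp add: e_def frac_le)
      then show "ennreal (z * indicator {e m<..<1} z) \<le> ennreal (z * indicator {e n<..<1} z)"
        using e[of n] by (auto split: split_indicator intro!: ennreal_leI)
    qed
    fix z :: real
    have "e \<longlonglongrightarrow> 0"
      unfolding e_def by real_asymp
    then have "\<forall>\<^sub>F n in sequentially. 0 < z \<longrightarrow> e n < z"
      by (cases "0 < z") (auto dest: order_tendstoD(2))
    moreover have "ennreal (z * indicator {e n<..<1} z) = ennreal (z * indicator {0<..<1} z)"
      if "0 < z \<longrightarrow> e n < z" for n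
      using that e[of n] by (auto split: split_indicator)
    ultimately have "\<forall>\<^sub>F n in sequentially.
        ennreal (z * indicator {e n<..<1} z) = ennreal (z * indicator {0<..<1} z)"
      by (auto elim: eventually_mono)
    then show "(\<lambda>n. ennreal (z * indicator {e n<..<1} z)) \<longlonglongrightarrow> ennreal (z * indicator {0<..<1} z)"
      by (rule tendsto_eventually)
  qed (simp add: borel_measurable_Lm)
  moreover have "(\<integral>\<^sup>+ z. ennreal (z * indicator {e n<..<1} z) \<partial>Lm) = ennreal (small_jump_mean (e n))" for n
    unfolding small_jump_mean_def
    by (rule nn_integral_eq_integral[OF integrable_small_jumps]) (use e[of n] in \<open>auto split: split_indicator\<close>)
  ultimately show ?thesis by (simp add: e_def)
qed

text \<open>If s = 0 and the process is not a subordinator, the mean of the jumps in (0, 1) (possibly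
  infinite) exceeds gam, hence so does the mean of those in (e, 1) for small e.\<close>

lemma small_jump_mean_gt:
  assumes "\<not> subordinator_triplet gam s Lm" and "s = 0"
  obtains e where "0 < e" "e < 1" "gam < small_jump_mean e"
proof (cases "gam < 0")
  case True
  then show ?thesis using small_jump_mean_nonneg[of "1/2"] that[of "1/2"] by auto
next
  case False
  define N where "N = (\<integral>\<^sup>+ z. ennreal (z * indicator {0<..<1} z) \<partial>Lm)"
  have "ennreal gam < N"
  proof (cases "N < \<infinity>")
    case True
    have int: "integrable Lm (\<lambda>z. z * indicator {0<..<1} z)"
      by (rule integrableI_nonneg) (use True in \<open>auto simp: N_def borel_measurable_Lm split: split_indicator\<close>)
    have "N = ennreal (\<integral> z. z * indicator {0<..<1} z \<partial>Lm)"
      unfolding N_def by (rule nn_integral_eq_integral[OF int]) (auto split: split_indicator)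
    then show ?thesis
      using assms True False unfolding subordinator_triplet_def N_def by (simp add: ennreal_less_iff)
  qed (auto simp: not_less top_unique)
  from order_tendstoD(1)[OF small_jump_mean_LIMSEQ[folded N_def] this]
  obtain n where "ennreal gam < ennreal (small_jump_mean (1 / (real n + 2)))"
    by (auto simp: eventually_sequentially)
  then show ?thesis using that[of "1 / (real n + 2)"] False by (simp add: ennreal_less_iff)
qed

lemma levy_psi_at_top:
  assumes "\<not> subordinator_triplet gam s Lm"
  shows "filterlim (levy_psi gam s Lm) at_top at_top"
proof -
  obtain e where e: "0 < e" "e < 1" "s = 0 \<Longrightarrow> gam < small_jump_mean e"
    using small_jump_mean_gt[OF assms] by (metis field_lbound_gt_zero zero_less_one)
  define B where "B = measure Lm {e<..<1} + measure Lm {1..}"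
  have "filterlim (\<lambda>\<theta>. (small_jump_mean e - gam) * \<theta> + s * \<theta>^2 / 2 - B) at_top at_top"
  proof (cases "s = 0")
    case True
    then show ?thesis using e(3) by simp real_asymp
  next
    case False
    then have "0 < s" using s_nonneg by simp
    then show ?thesis by real_asymp
  qed
  moreover have "\<forall>\<^sub>F \<theta> in at_top. (small_jump_mean e - gam) * \<theta> + s * \<theta>^2 / 2 - B \<le> levy_psi gam s Lm \<theta>"
    using eventually_gt_at_top[of 0]
    by eventually_elim (use levy_psi_lower_bound e in \<open>simp add: B_def algebra_simps\<close>)
  ultimately show ?thesis by (rule filterlim_at_top_mono)
qed

end

section \<open>The selection function Gam and the selected pair\<close>

lemma eventually_at_right_0_mult_less:
  fixes c \<epsilon> :: real
  assumes "0 < \<epsilon>"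
  shows "\<forall>\<^sub>F \<beta> in at_right 0. \<beta> * c < \<epsilon>"
proof -
  have "((\<lambda>\<beta>. \<beta> * c) \<longlongrightarrow> 0 * c) (at_right 0)"
    by (intro tendsto_intros)
  then show ?thesis using assms by (intro order_tendstoD) auto
qed

lemma eventually_at_right_0_unit: "\<forall>\<^sub>F \<beta> in at_right 0. 0 < \<beta> \<and> \<beta> < (1::real)"
  unfolding eventually_at_right_field by (intro exI[of _ 1]) auto

locale selection =
  fixes q \<delta> \<rho> d :: real and WW W :: "real \<Rightarrow> real"
  assumes q: "0 < q" and \<delta>: "0 < \<delta>" and W: "nonneg_scale W" and WW: "nonneg_scale WW"
begin

abbreviation "Z \<equiv> scaleZ q W"
abbreviation "ZZ \<equiv> scaleZ q WW"
abbreviation "Zbar \<equiv> scaleZbar q W"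
abbreviation "G \<beta> a b \<equiv> Gam q \<delta> \<rho> WW W d \<beta> a b"
abbreviation "a_sel \<equiv> astar q \<delta> \<rho> WW W d"
abbreviation "b_sel \<equiv> bstar q \<delta> \<rho> WW W d"

lemma Gam_eq: "G \<beta> a b = \<delta> * ZZ a - q * \<rho> - q * \<beta> *
   (Zbar b + d / q + \<delta> * integral {b - a..b} (\<lambda>y. WW (b - y) * Z y))"
  unfolding Gam_def rtilde_def Rfun_def by simp

lemma Gam_0_left: "G \<beta> 0 b = \<delta> - q * \<rho> - q * \<beta> * Zbar b - \<beta> * d"
  unfolding Gam_eq using q by (simp add: algebra_simps scaleZ_def)

lemma Gam_0_0: "G \<beta> 0 0 = \<delta> - q * \<rho> - \<beta> * d"
  by (simp add: Gam_0_left scaleZbar_def)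

lemma selected_pair_0: "G \<beta> 0 0 \<le> 0 \<Longrightarrow> a_sel \<beta> = 0 \<and> b_sel \<beta> = 0"
  unfolding astar_def bstar_def by simp

lemma continuous_on_kernel:
  assumes "0 \<le> c"
  shows "continuous_on {c..b} (\<lambda>y. WW (b - y) * Z y)"
proof -
  have "continuous_on {c..b} (\<lambda>y. WW (b - y))"
    by (rule continuous_on_compose2[of "{0..}" WW])
      (use WW in \<open>auto simp: nonneg_scale_def intro!: continuous_intros\<close>)
  moreover have "continuous_on {c..b} Z"
    by (rule continuous_on_subset[OF continuous_on_scaleZ[OF W]]) (use assms in auto)
  ultimately show ?thesis by (intro continuous_intros)
qed

text \<open>The convolution integral in Gam, rescaled by y = b - a + a t to the fixed interval [0, 1],
  so that its joint continuity in (a, b) follows from continuity of parameter integrals.\<close>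

definition conv :: "real \<Rightarrow> real \<Rightarrow> real" where
  "conv a b = integral {0..1} (\<lambda>t. a * (WW (a - a * t) * Z (b - a + a * t)))"

lemma integral_kernel_eq_conv:
  assumes "0 \<le> a" "a \<le> b"
  shows "integral {b - a..b} (\<lambda>y. WW (b - y) * Z y) = conv a b"
proof -
  have "((\<lambda>t. a *\<^sub>R (\<lambda>y. WW (b - y) * Z y) (b - a + a * t)) has_integral
      integral {b - a + a * 0..b - a + a * 1} (\<lambda>y. WW (b - y) * Z y)) {0..1}"
  proof (rule has_integral_substitution[where c="b-a" and d=b])
    show "(\<lambda>t. b - a + a * t) ` {0..1} \<subseteq> {b - a..b}"
      using assms by (auto intro!: mult_left_le)
    show "continuous_on {b - a..b} (\<lambda>y. WW (b - y) * Z y)"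
      using assms by (intro continuous_on_kernel) auto
    show "((\<lambda>t. b - a + a * t) has_real_derivative a) (at t within {0..1})" for t
      by (auto intro!: derivative_eq_intros)
  qed (use assms in auto)
  then show ?thesis
    unfolding conv_def by (intro integral_unique[symmetric]) (simp add: algebra_simps)
qed

lemma Gam_eq_conv:
  assumes "0 \<le> a" "a \<le> b"
  shows "G \<beta> a b = \<delta> * ZZ a - q * \<rho> - q * \<beta> * (Zbar b + d / q + \<delta> * conv a b)"
  unfolding Gam_eq integral_kernel_eq_conv[OF assms] ..

lemma continuous_on_Gam: "continuous_on {p. 0 \<le> fst p \<and> fst p \<le> snd p} (\<lambda>p. G \<beta> (fst p) (snd p))"
proof -
  define U where "U = {p :: real \<times> real. 0 \<le> fst p \<and> fst p \<le> snd p}"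
  have "continuous_on (U \<times> cbox 0 1)
     (\<lambda>(p, t). fst p * (WW (fst p - fst p * t) * Z (snd p - fst p + fst p * t)))"
  proof -
    have "continuous_on (U \<times> cbox 0 1) (\<lambda>x. WW (fst (fst x) - fst (fst x) * snd x))"
      by (rule continuous_on_compose2[of "{0..}" WW])
        (use WW in \<open>auto simp: nonneg_scale_def U_def cbox_interval intro!: continuous_intros mult_left_le\<close>)
    moreover have "continuous_on (U \<times> cbox 0 1) (\<lambda>x. Z (snd (fst x) - fst (fst x) + fst (fst x) * snd x))"
      by (rule continuous_on_compose2[OF continuous_on_scaleZ[OF W]])
        (auto simp: U_def cbox_interval intro!: continuous_intros)
    ultimately show ?thesis unfolding case_prod_beta by (intro continuous_intros)
  qed
  from integral_continuous_on_param[OF this]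
  have "continuous_on U (\<lambda>p. conv (fst p) (snd p))"
    unfolding conv_def by (simp add: cbox_interval)
  moreover have "continuous_on U (\<lambda>p. ZZ (fst p))"
    by (rule continuous_on_compose2[OF continuous_on_scaleZ[OF WW]])
      (auto simp: U_def intro!: continuous_intros)
  moreover have "continuous_on U (\<lambda>p. Zbar (snd p))"
    by (rule continuous_on_compose2[OF continuous_on_scaleZbar[OF W]])
      (auto simp: U_def intro!: continuous_intros)
  ultimately have "continuous_on U (\<lambda>p. \<delta> * ZZ (fst p) - q * \<rho> - q * \<beta> *
      (Zbar (snd p) + d / q + \<delta> * conv (fst p) (snd p)))"
    by (intro continuous_intros)
  then show ?thesis
    unfolding U_def[symmetric] by (rule continuous_on_cong[THEN iffD1, rotated 2]) (auto simp: U_def Gam_eq_conv)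
qed

lemma continuous_on_Gam_left:
  assumes "0 \<le> a1" "a2 \<le> b"
  shows "continuous_on {a1..a2} (\<lambda>a. G \<beta> a b)"
  by (rule continuous_on_compose2[OF continuous_on_Gam, of _ "\<lambda>a. (a, b)", simplified])
    (use assms in \<open>auto intro!: continuous_intros\<close>)

text \<open>Only ZZ a and the lower limit b - a of the convolution integral depend on a.\<close>

lemma Gam_has_derivative_left:
  assumes "0 < a" "a < b"
  shows "((\<lambda>x. G \<beta> x b) has_real_derivative q * \<delta> * WW a * (1 - \<beta> * Z (b - a))) (at a)"
proof -
  define f where "f y = WW (b - y) * Z y" for y
  define K where "K x = integral {0..x} f" for x
  define H where "H x = (\<delta> - q * \<rho> - q * \<beta> * (Zbar b + d / q + \<delta> * K b))
      + \<delta> * q * integral {0..x} WW + q * \<beta> * \<delta> * K (b - x)" for x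
  have f: "continuous_on {0..b} f" unfolding f_def by (rule continuous_on_kernel) simp
  have eq: "G \<beta> x b = H x" if "x \<in> {0<..<b}" for x
  proof -
    have "K (b - x) + integral {b - x..b} f = K b"
      unfolding K_def
      by (rule Henstock_Kurzweil_Integration.integral_combine)
        (use that f integrable_continuous_real in auto)
    then have ie: "integral {b - x..b} f = K b - K (b - x)" by linarith
    show ?thesis
      unfolding Gam_eq H_def scaleZ_def[of q WW] f_def[symmetric] ie by (simp add: algebra_simps)
  qed
  have "((\<lambda>x. integral {0..x} WW) has_real_derivative WW a) (at a within {0..b})"
    by (rule integral_has_real_derivative) (use assms nonneg_scale_continuous_on[OF WW] in auto)
  then have dWW: "((\<lambda>x. integral {0..x} WW) has_real_derivative WW a) (at a)"
    using assms by (simp add: at_within_Icc_at)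
  have "(K has_real_derivative f (b - a)) (at (b - a) within {0..b})"
    unfolding K_def by (rule integral_has_real_derivative) (use assms f in auto)
  then have "(K has_real_derivative f (b - a)) (at (b - a))"
    using assms by (simp add: at_within_Icc_at)
  then have dK: "((\<lambda>x. K (b - x)) has_real_derivative f (b - a) * - 1) (at a)"
    by (rule DERIV_chain2[where f=K and g="\<lambda>x. b - x"]) (auto intro!: derivative_eq_intros)
  have "(H has_real_derivative 0 + \<delta> * q * WW a + q * \<beta> * \<delta> * (f (b - a) * - 1)) (at a)"
    unfolding H_def by (intro DERIV_add DERIV_cmult DERIV_const dWW dK)
  then have "(H has_real_derivative q * \<delta> * WW a * (1 - \<beta> * Z (b - a))) (at a)"
    by (simp add: f_def algebra_simps)
  then show ?thesis
    by (rule has_field_derivative_transform_within_open[where S="{0<..<b}"]) (use assms eq in auto)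
qed

lemma Gam_left_less:
  assumes "0 \<le> a1" "a1 < a2" "a2 \<le> b" and lt: "\<And>x. a1 < x \<Longrightarrow> x < a2 \<Longrightarrow> \<beta> * Z (b - x) < 1"
  shows "G \<beta> a1 b < G \<beta> a2 b"
proof (rule DERIV_pos_imp_increasing_open[OF assms(2) _ continuous_on_Gam_left[OF assms(1,3)]])
  fix x assume x: "a1 < x" "x < a2"
  have "0 < q * \<delta> * WW x * (1 - \<beta> * Z (b - x))"
    using nonneg_scale_pos[OF WW, of x] lt[OF x] x assms q \<delta> by simp
  with Gam_has_derivative_left[of x b \<beta>] x assms
  show "\<exists>y. ((\<lambda>x. G \<beta> x b) has_real_derivative y) (at x) \<and> 0 < y" by auto
qed

lemma Gam_left_greater:
  assumes "0 \<le> a1" "a1 < a2" "a2 \<le> b" and gt: "\<And>x. a1 < x \<Longrightarrow> x < a2 \<Longrightarrow> 1 < \<beta> * Z (b - x)"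
  shows "G \<beta> a2 b < G \<beta> a1 b"
proof (rule DERIV_neg_imp_decreasing_open[OF assms(2) _ continuous_on_Gam_left[OF assms(1,3)]])
  fix x assume x: "a1 < x" "x < a2"
  have "q * \<delta> * WW x * (1 - \<beta> * Z (b - x)) < 0"
    using nonneg_scale_pos[OF WW, of x] gt[OF x] x assms q \<delta> by (simp add: mult_pos_neg)
  with Gam_has_derivative_left[of x b \<beta>] x assms
  show "\<exists>y. ((\<lambda>x. G \<beta> x b) has_real_derivative y) (at x) \<and> y < 0" by auto
qed

text \<open>The derivative in a changes sign where \<beta> Z (b - a) = 1, i.e. at a = b - threshold \<beta>.\<close>

definition threshold :: "real \<Rightarrow> real" where
  "threshold \<beta> = (THE z. 0 \<le> z \<and> Z z = 1 / \<beta>)"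

lemma threshold:
  assumes "0 < \<beta>" "\<beta> < 1"
  shows "0 < threshold \<beta>" "Z (threshold \<beta>) = 1 / \<beta>"
proof -
  obtain z where z: "0 < z" "Z z = 1 / \<beta>"
    using scaleZ_attains[OF W q, of "1 / \<beta>"] assms by auto
  have "threshold \<beta> = z"
    unfolding threshold_def
  proof (rule the_equality)
    fix y assume "0 \<le> y \<and> Z y = 1 / \<beta>"
    then show "y = z"
      using z scaleZ_less_iff[OF W q, of y z] scaleZ_less_iff[OF W q, of z y] by (auto simp: neq_iff)
  qed (use z in simp)
  with z show "0 < threshold \<beta>" "Z (threshold \<beta>) = 1 / \<beta>" by simp_all
qed

lemma threshold_less_iff:
  assumes "0 < \<beta>" "\<beta> < 1" "0 \<le> t"
  shows "\<beta> * Z t < 1 \<longleftrightarrow> t < threshold \<beta>"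
    and "1 < \<beta> * Z t \<longleftrightarrow> threshold \<beta> < t"
proof -
  note z0 = threshold[OF assms(1,2)]
  have "\<beta> * Z (threshold \<beta>) = 1" using assms(1) z0(2) by simp
  then have "\<beta> * Z t < 1 \<longleftrightarrow> Z t < Z (threshold \<beta>)" "1 < \<beta> * Z t \<longleftrightarrow> Z (threshold \<beta>) < Z t"
    using assms(1) by (metis mult_less_cancel_left_pos)+
  moreover have "Z t < Z (threshold \<beta>) \<longleftrightarrow> t < threshold \<beta>"
    "Z (threshold \<beta>) < Z t \<longleftrightarrow> threshold \<beta> < t"
    using scaleZ_less_iff[OF W q] z0(1) assms(3) by simp_all
  ultimately show "\<beta> * Z t < 1 \<longleftrightarrow> t < threshold \<beta>" "1 < \<beta> * Z t \<longleftrightarrow> threshold \<beta> < t"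
    by simp_all
qed

definition argmin :: "real \<Rightarrow> real \<Rightarrow> real" where
  "argmin \<beta> b = max 0 (b - threshold \<beta>)"

lemma argmin_less:
  assumes "0 < \<beta>" "\<beta> < 1" "a \<in> {0..b}" "a \<noteq> argmin \<beta> b"
  shows "G \<beta> (argmin \<beta> b) b < G \<beta> a b"
proof (cases "argmin \<beta> b < a")
  case True
  show ?thesis
  proof (rule Gam_left_less)
    fix x assume "argmin \<beta> b < x" "x < a"
    then have "b - x < threshold \<beta>" "0 \<le> b - x" using assms(3) by (auto simp: argmin_def)
    then show "\<beta> * Z (b - x) < 1" using threshold_less_iff(1)[OF assms(1,2)] by blast
  qed (use True assms(3) in \<open>auto simp: argmin_def\<close>)
next
  case False
  then have a: "a < b - threshold \<beta>" and eq: "argmin \<beta> b = b - threshold \<beta>"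
    using assms(3,4) by (auto simp: argmin_def)
  show ?thesis unfolding eq
  proof (rule Gam_left_greater)
    fix x assume "a < x" "x < b - threshold \<beta>"
    then have "threshold \<beta> < b - x" "0 \<le> b - x" using threshold(1)[OF assms(1,2)] by auto
    then show "1 < \<beta> * Z (b - x)" using threshold_less_iff(2)[OF assms(1,2)] by blast
  qed (use a assms(3) threshold(1)[OF assms(1,2)] in auto)
qed

lemma argmin_in: "0 < \<beta> \<Longrightarrow> \<beta> < 1 \<Longrightarrow> 0 \<le> b \<Longrightarrow> argmin \<beta> b \<in> {0..b}"
  using threshold(1)[of \<beta>] by (auto simp: argmin_def)

lemma integrable_conv_integrand:
  assumes "0 \<le> a" "a \<le> b"
  shows "(\<lambda>t. a * (WW (a - a * t) * Z (b - a + a * t))) integrable_on {0..1}"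
proof (rule integrable_continuous_real)
  have "continuous_on {0..1} (\<lambda>t. WW (a - a * t))"
    by (rule continuous_on_compose2[OF nonneg_scale_continuous_on[OF WW, of 0 a]])
      (use assms in \<open>auto intro!: continuous_intros mult_left_le\<close>)
  moreover have "continuous_on {0..1} (\<lambda>t. Z (b - a + a * t))"
    by (rule continuous_on_compose2[OF continuous_on_scaleZ[OF W]])
      (use assms in \<open>auto intro!: continuous_intros\<close>)
  ultimately show "continuous_on {0..1} (\<lambda>t. a * (WW (a - a * t) * Z (b - a + a * t)))"
    by (intro continuous_intros)
qed

lemma conv_mono:
  assumes "0 \<le> a" "a \<le> b" "b \<le> b'"
  shows "conv a b \<le> conv a b'"
  unfolding conv_def
proof (rule integral_le)
  show "(\<lambda>t. a * (WW (a - a * t) * Z (b - a + a * t))) integrable_on {0..1}"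
    "(\<lambda>t. a * (WW (a - a * t) * Z (b' - a + a * t))) integrable_on {0..1}"
    using assms by (auto intro!: integrable_conv_integrand)
  fix t :: real assume t: "t \<in> {0..1}"
  have "0 \<le> WW (a - a * t)"
    using t assms by (intro nonneg_scale_nonneg[OF WW]) (auto intro!: mult_left_le)
  moreover have "Z (b - a + a * t) \<le> Z (b' - a + a * t)"
    using t assms by (intro scaleZ_mono[OF W q]) auto
  ultimately show "a * (WW (a - a * t) * Z (b - a + a * t)) \<le> a * (WW (a - a * t) * Z (b' - a + a * t))"
    using assms by (intro mult_left_mono) auto
qed

lemma Gam_right_less:
  assumes "0 < \<beta>" "0 \<le> a" "a \<le> b" "b < b'"
  shows "G \<beta> a b' < G \<beta> a b"
proof -
  have "b' - b \<le> Zbar b' - Zbar b" using assms by (intro scaleZbar_diff_ge[OF W q]) auto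
  moreover have "conv a b \<le> conv a b'" using assms by (intro conv_mono) auto
  ultimately have "Zbar b + d / q + \<delta> * conv a b < Zbar b' + d / q + \<delta> * conv a b'"
    using assms \<delta> mult_left_mono[of "conv a b" "conv a b'" \<delta>] by linarith
  then show ?thesis
    using assms q by (simp add: Gam_eq_conv)
qed

definition Gam_min :: "real \<Rightarrow> real \<Rightarrow> real" where
  "Gam_min \<beta> b = G \<beta> (argmin \<beta> b) b"

context
  fixes \<beta> :: real
  assumes \<beta>: "0 < \<beta>" "\<beta> < 1"
begin

lemma Gam_min_le: "a \<in> {0..b} \<Longrightarrow> Gam_min \<beta> b \<le> G \<beta> a b"
  using argmin_less[OF \<beta>, of a b] unfolding Gam_min_def by (cases "a = argmin \<beta> b") auto

lemma INF_Gam_eq_Gam_min: "0 \<le> b \<Longrightarrow> (INF a\<in>{0..b}. G \<beta> a b) = Gam_min \<beta> b"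
  unfolding Gam_min_def
  by (rule cInf_eq_minimum) (use argmin_in[OF \<beta>] Gam_min_le in \<open>auto simp: Gam_min_def\<close>)

lemma Gam_min_less:
  assumes "0 \<le> b" "b < b'"
  shows "Gam_min \<beta> b' < Gam_min \<beta> b"
proof -
  have "Gam_min \<beta> b' \<le> G \<beta> (argmin \<beta> b) b'"
    using argmin_in[OF \<beta> assms(1)] assms by (intro Gam_min_le) auto
  also have "\<dots> < Gam_min \<beta> b"
    unfolding Gam_min_def using argmin_in[OF \<beta> assms(1)] assms \<beta> by (intro Gam_right_less) auto
  finally show ?thesis .
qed

lemma Gam_min_root_unique:
  assumes "0 \<le> b" "0 \<le> b'" "Gam_min \<beta> b = 0" "Gam_min \<beta> b' = 0"
  shows "b = b'"
  using Gam_min_less[of b b'] Gam_min_less[of b' b] assms by (cases b b' rule: linorder_cases) auto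

lemma continuous_on_Gam_min: "continuous_on {0..} (Gam_min \<beta>)"
proof -
  have c: "continuous_on {0..} (\<lambda>b. (argmin \<beta> b, b))"
    unfolding argmin_def by (intro continuous_intros)
  have sub: "(\<lambda>b. (argmin \<beta> b, b)) ` {0..} \<subseteq> {p. 0 \<le> fst p \<and> fst p \<le> snd p}"
  proof (rule image_subsetI)
    fix b :: real assume "b \<in> {0..}"
    then show "(argmin \<beta> b, b) \<in> {p. 0 \<le> fst p \<and> fst p \<le> snd p}"
      using argmin_in[OF \<beta>, of b] by simp
  qed
  from continuous_on_compose2[OF continuous_on_Gam c sub] show ?thesis
    unfolding Gam_min_def by simp
qed

lemma Gam_0_left_nonpos: "\<exists>B\<ge>0. G \<beta> 0 B \<le> 0"
proof -
  define B where "B = max 0 ((\<delta> - q * \<rho> - \<beta> * d) / (q * \<beta>))"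
  have B: "0 \<le> B" by (simp add: B_def)
  have "\<delta> - q * \<rho> - \<beta> * d = q * \<beta> * ((\<delta> - q * \<rho> - \<beta> * d) / (q * \<beta>))"
    using q \<beta> by simp
  also have "\<dots> \<le> q * \<beta> * B"
    using q \<beta> by (intro mult_left_mono) (auto simp: B_def)
  also have "\<dots> \<le> q * \<beta> * Zbar B"
    using scaleZbar_diff_ge[OF W q, of 0 B] B q \<beta> by (intro mult_left_mono) simp_all
  finally have "G \<beta> 0 B \<le> 0" unfolding Gam_0_left by linarith
  with B show ?thesis by blast
qed

text \<open>The selected pair: Gam_min \<beta> starts positive at b = 0, decreases strictly and becomes
  nonpositive, so it has a unique root b*, and Gam(., b*) is minimised exactly at argmin.\<close>

lemma selected_pair:
  assumes "0 < G \<beta> 0 0"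
  obtains b where "0 < b" "Gam_min \<beta> b = 0" "b_sel \<beta> = b" "a_sel \<beta> = argmin \<beta> b"
proof -
  obtain B where B: "0 \<le> B" "G \<beta> 0 B \<le> 0" using Gam_0_left_nonpos by blast
  have "Gam_min \<beta> 0 > 0" using assms by (simp add: Gam_min_def argmin_def threshold[OF \<beta>])
  moreover have "Gam_min \<beta> B \<le> 0" using Gam_min_le[of 0 B] B by simp
  ultimately obtain b where b: "0 \<le> b" "b \<le> B" "Gam_min \<beta> b = 0"
    using IVT2'[of "Gam_min \<beta>" B 0 0] B continuous_on_subset[OF continuous_on_Gam_min, of "{0..B}"]
    by auto
  have "0 < b" using b \<open>Gam_min \<beta> 0 > 0\<close> by (cases "b = 0") auto
  have pos: "\<not> G \<beta> 0 0 \<le> 0" using assms by simp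
  have bs: "b_sel \<beta> = b"
    unfolding bstar_def if_not_P[OF pos]
  proof (rule the_equality)
    show "0 < b \<and> (INF a\<in>{0..b}. G \<beta> a b) = 0"
      using \<open>0 < b\<close> b INF_Gam_eq_Gam_min by simp
    fix b' assume "0 < b' \<and> (INF a\<in>{0..b'}. G \<beta> a b') = 0"
    then show "b' = b" using Gam_min_root_unique[of b' b] INF_Gam_eq_Gam_min[of b'] b by simp
  qed
  have as: "a_sel \<beta> = argmin \<beta> b"
    unfolding astar_def if_not_P[OF pos] Let_def bs
  proof (rule the_equality)
    show "argmin \<beta> b \<in> {0..b} \<and> (\<forall>a'\<in>{0..b}. G \<beta> (argmin \<beta> b) b \<le> G \<beta> a' b)"
      using argmin_in[OF \<beta> b(1)] Gam_min_le by (simp add: Gam_min_def)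
    fix a assume a: "a \<in> {0..b} \<and> (\<forall>a'\<in>{0..b}. G \<beta> a b \<le> G \<beta> a' b)"
    show "a = argmin \<beta> b"
    proof (rule ccontr)
      assume "a \<noteq> argmin \<beta> b"
      then have "G \<beta> (argmin \<beta> b) b < G \<beta> a b" using argmin_less[OF \<beta>] a by blast
      moreover have "G \<beta> a b \<le> G \<beta> (argmin \<beta> b) b" using a argmin_in[OF \<beta> b(1)] by blast
      ultimately show False by simp
    qed
  qed
  from that[OF \<open>0 < b\<close> b(3) bs as] show ?thesis .
qed

end

lemma Gam_lower_bound:
  assumes "0 \<le> a" "a \<le> b" "0 \<le> \<beta>"
  shows "\<delta> - q * \<rho> - q * \<beta> * (Zbar b + d / q + \<delta> * integral {0..b} (\<lambda>y. WW (b - y) * Z y)) \<le> G \<beta> a b"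
proof -
  have "integral {b - a..b} (\<lambda>y. WW (b - y) * Z y) \<le> integral {0..b} (\<lambda>y. WW (b - y) * Z y)"
  proof (rule integral_subset_le)
    show "(\<lambda>y. WW (b - y) * Z y) integrable_on {b - a..b}" "(\<lambda>y. WW (b - y) * Z y) integrable_on {0..b}"
      using assms by (simp_all add: integrable_continuous_real continuous_on_kernel)
    show "\<forall>x\<in>{0..b}. 0 \<le> WW (b - x) * Z x"
    proof
      fix x assume "x \<in> {0..b}"
      then show "0 \<le> WW (b - x) * Z x"
        using nonneg_scale_nonneg[OF WW, of "b - x"] scaleZ_ge_1[OF W q, of x] by simp
    qed
  qed (use assms in auto)
  moreover have "1 \<le> ZZ a" using scaleZ_ge_1[OF WW q] assms by simp
  ultimately have "\<delta> * 1 \<le> \<delta> * ZZ a"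
    "q * \<beta> * \<delta> * integral {b - a..b} (\<lambda>y. WW (b - y) * Z y)
      \<le> q * \<beta> * \<delta> * integral {0..b} (\<lambda>y. WW (b - y) * Z y)"
    using assms q \<delta> by (intro mult_left_mono; simp)+
  then show ?thesis unfolding Gam_eq by (simp add: algebra_simps)
qed

section \<open>The selected pair as \<beta> tends to 0\<close>

lemma eventually_selected_pair:
  assumes "q * \<rho> < \<delta>"
  shows "\<forall>\<^sub>F \<beta> in at_right 0. 0 < \<beta> \<and> \<beta> < 1 \<and> 0 < G \<beta> 0 0"
proof -
  have "\<forall>\<^sub>F \<beta> in at_right 0. \<beta> * d < \<delta> - q * \<rho>"
    using assms by (intro eventually_at_right_0_mult_less) simp
  moreover have "\<forall>\<^sub>F \<beta>::real in at_right 0. 0 < \<beta> \<and> \<beta> < 1"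
    by (rule eventually_at_right_0_unit)
  ultimately show ?thesis by eventually_elim (simp add: Gam_0_0)
qed

lemma eventually_bstar_pos:
  assumes "q * \<rho> < \<delta>"
  shows "\<forall>\<^sub>F \<beta> in at_right 0. 0 < b_sel \<beta>"
  using eventually_selected_pair[OF assms]
  by eventually_elim (metis selected_pair)

text \<open>For fixed M, Gam(a, M) stays close to \<delta> - q \<rho> > 0 uniformly in a as \<beta> \<rightarrow> 0, so the
  root b* of the decreasing function Gam_min \<beta> lies beyond M.\<close>

lemma bstar_at_top:
  assumes "q * \<rho> < \<delta>"
  shows "filterlim b_sel at_top (at_right 0)"
  unfolding filterlim_at_top
proof
  fix M :: real
  define M' where "M' = max 0 M"
  define X where "X = Zbar M' + d / q + \<delta> * integral {0..M'} (\<lambda>y. WW (M' - y) * Z y)"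
  have "\<forall>\<^sub>F \<beta> in at_right 0. \<beta> * (q * X) < \<delta> - q * \<rho>"
    using assms by (intro eventually_at_right_0_mult_less) simp
  with eventually_selected_pair[OF assms]
  show "\<forall>\<^sub>F \<beta> in at_right 0. M \<le> b_sel \<beta>"
  proof eventually_elim
    case (elim \<beta>)
    then have \<beta>: "0 < \<beta>" "\<beta> < 1" by simp_all
    obtain b where b: "0 < b" "Gam_min \<beta> b = 0" "b_sel \<beta> = b"
      using selected_pair[OF \<beta>] elim by blast
    have M': "0 \<le> M'" by (simp add: M'_def)
    have "0 < \<delta> - q * \<rho> - q * \<beta> * X" using elim by (simp add: algebra_simps)
    also have "\<dots> \<le> Gam_min \<beta> M'"
      unfolding Gam_min_def X_def using argmin_in[OF \<beta> M'] \<beta>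
      by (intro Gam_lower_bound) auto
    finally have "M' < b"
      using Gam_min_less[OF \<beta> less_imp_le[OF b(1)], of M'] b(2) by (cases b M' rule: linorder_cases) auto
    then show ?case using b(3) by (simp add: M'_def)
  qed
qed

lemma eventually_selected_pair_0:
  assumes "\<delta> < q * \<rho>"
  shows "\<forall>\<^sub>F \<beta> in at_right 0. a_sel \<beta> = 0 \<and> b_sel \<beta> = 0"
proof -
  have "\<forall>\<^sub>F \<beta> in at_right 0. \<beta> * - d < q * \<rho> - \<delta>"
    using assms by (intro eventually_at_right_0_mult_less) simp
  then show ?thesis by eventually_elim (intro selected_pair_0, simp add: Gam_0_0)
qed

context
  assumes critical: "q * \<rho> = \<delta>"
begin

lemma selected_pair_critical_0: "0 \<le> d \<Longrightarrow> 0 < \<beta> \<Longrightarrow> a_sel \<beta> = 0 \<and> b_sel \<beta> = 0"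
  by (intro selected_pair_0) (simp add: Gam_0_0 critical)

lemma bstar_critical_pos:
  assumes "d < 0" "0 < \<beta>" "\<beta> < 1"
  shows "0 < b_sel \<beta>"
  using selected_pair[OF assms(2,3)] assms by (simp add: Gam_0_0 critical mult_pos_neg) metis

text \<open>Once c < threshold \<beta>, the minimiser of Gam(., c) is a = 0 and
  Gam(0, c) = -\<beta> (q Zbar c + d) = 0, so (0, c) is the selected pair.\<close>

lemma eventually_selected_pair_critical:
  assumes "d < 0" "0 \<le> c" "Zbar c = - d / q"
  shows "\<forall>\<^sub>F \<beta> in at_right 0. a_sel \<beta> = 0 \<and> b_sel \<beta> = c"
proof -
  have "\<forall>\<^sub>F \<beta> in at_right 0. \<beta> * Z c < 1"
    by (intro eventually_at_right_0_mult_less) simp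
  moreover have "\<forall>\<^sub>F \<beta>::real in at_right 0. 0 < \<beta> \<and> \<beta> < 1"
    by (rule eventually_at_right_0_unit)
  ultimately show ?thesis
  proof eventually_elim
    case (elim \<beta>)
    then have \<beta>: "0 < \<beta>" "\<beta> < 1" by simp_all
    have "argmin \<beta> c = 0"
      using threshold_less_iff(1)[OF \<beta> assms(2)] elim by (simp add: argmin_def)
    then have root: "Gam_min \<beta> c = 0"
      using assms q by (simp add: Gam_min_def Gam_0_left critical)
    obtain b where b: "0 < b" "Gam_min \<beta> b = 0" "b_sel \<beta> = b" "a_sel \<beta> = argmin \<beta> b"
      using selected_pair[OF \<beta>] assms \<beta> by (simp add: Gam_0_0 critical mult_pos_neg) metis
    have "b = c" using Gam_min_root_unique[OF \<beta> _ assms(2) b(2) root] b(1) by simp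
    with b \<open>argmin \<beta> c = 0\<close> show ?case by simp
  qed
qed

lemma selected_pair_critical_limits:
  assumes "d < 0"
  shows "(b_sel \<longlongrightarrow> the_inv_into {0..} Zbar (- d / q)) (at_right 0)" and "(a_sel \<longlongrightarrow> 0) (at_right 0)"
proof -
  obtain c where c: "0 \<le> c" "Zbar c = - d / q"
    using scaleZbar_attains[OF W q, of "- d / q"] assms q by (auto simp: field_simps)
  have "the_inv_into {0..} Zbar (- d / q) = c"
    using c by (intro the_inv_into_f_eq inj_on_scaleZbar[OF W q]) auto
  with eventually_selected_pair_critical[OF assms c]
  show "(b_sel \<longlongrightarrow> the_inv_into {0..} Zbar (- d / q)) (at_right 0)" "(a_sel \<longlongrightarrow> 0) (at_right 0)"
    by (auto intro: tendsto_eventually elim: eventually_mono)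
qed

end

end

theorem mainTheorem10:
  fixes gam s :: real and Lm :: "real measure" and q \<delta> \<rho> :: real
    and WW W :: "real \<Rightarrow> real"
  assumes triplet: "spos_levy_triplet gam s Lm"
    and mean: "finite_mean_triplet Lm"
    and notsub: "\<not> subordinator_triplet gam s Lm"
    and q: "q > 0" and \<delta>: "\<delta> > 0"
    and WW: "is_scale_function (levy_psi gam s Lm) q WW"
    and W: "is_scale_function (\<lambda>\<theta>. levy_psi gam s Lm \<theta> + \<delta> * \<theta>) q W"
  defines "d \<equiv> right_deriv0 (\<lambda>\<theta>. levy_psi gam s Lm \<theta> + \<delta> * \<theta>)"
  defines "as \<equiv> astar q \<delta> \<rho> WW W d" and "bs \<equiv> bstar q \<delta> \<rho> WW W d"
  shows
    "(q * \<rho> / \<delta> < 1 \<longrightarrow>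
        (\<forall>\<^sub>F \<beta> in at_right 0. bs \<beta> > 0) \<and> filterlim bs at_top (at_right 0)) \<and>
     (q * \<rho> / \<delta> > 1 \<longrightarrow>
        (\<forall>\<^sub>F \<beta> in at_right 0. as \<beta> = 0 \<and> bs \<beta> = 0)) \<and>
     (q * \<rho> / \<delta> = 1 \<and> d < 0 \<longrightarrow>
        (\<forall>\<beta>\<in>{0<..<1}. bs \<beta> > 0) \<and>
        (bs \<longlongrightarrow> the_inv_into {0..} (scaleZbar q W) (- d / q)) (at_right 0) \<and>
        (as \<longlongrightarrow> 0) (at_right 0)) \<and>
     (q * \<rho> / \<delta> = 1 \<and> d \<ge> 0 \<longrightarrow>
        (\<forall>\<beta>\<in>{0<..<1}. as \<beta> = 0 \<and> bs \<beta> = 0))"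
proof -
  interpret spos_levy gam s Lm by (rule spos_levy.intro[OF triplet])
  have psi: "filterlim (levy_psi gam s Lm) at_top at_top"
    by (rule levy_psi_at_top[OF notsub])
  moreover have "\<forall>\<^sub>F \<theta> in at_top. levy_psi gam s Lm \<theta> \<le> levy_psi gam s Lm \<theta> + \<delta> * \<theta>"
    using eventually_ge_at_top[of 0] by eventually_elim (use \<delta> in simp)
  ultimately have psi_X: "filterlim (\<lambda>\<theta>. levy_psi gam s Lm \<theta> + \<delta> * \<theta>) at_top at_top"
    by (rule filterlim_at_top_mono)
  interpret selection q \<delta> \<rho> d WW W
    using q \<delta> nonneg_scale_if_scale_function[OF W psi_X] nonneg_scale_if_scale_function[OF WW psi]
    by unfold_locales
  have "q * \<rho> / \<delta> < 1 \<longleftrightarrow> q * \<rho> < \<delta>" "q * \<rho> / \<delta> > 1 \<longleftrightarrow> \<delta> < q * \<rho>"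
    "q * \<rho> / \<delta> = 1 \<longleftrightarrow> q * \<rho> = \<delta>"
    using \<delta> by (auto simp: field_simps)
  then show ?thesis
    unfolding as_def bs_def
    using eventually_bstar_pos bstar_at_top eventually_selected_pair_0
      bstar_critical_pos selected_pair_critical_limits selected_pair_critical_0
    by auto
qed

end
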